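(* Let $(\mathcal{X},\rho)$ be a totally bounded metric space, let $c:\mathcal{X}\to\mathcal{Y}$ be a concept, and let $\ell$ be the zero-one loss $\ell(x,y,\hat y)=\mathbb{1}\{y\neq\hat y\}$. Then there exists a sequence of instances $(x_t)_{t\ge1}$ in $\mathcal{X}$ on which the 1-nearest neighbor rule fails to achieve sublinear regret on $c$, i.e. such that $$\frac1T\sum_{t=1}^T \mathbb{1}\{c(x_t)\neq \hat y_t\}\not\to 0 \quad (T\to\infty),$$ if and only if there is no positive separation between classes: $$\inf_{x,x'\in\mathcal{X}:\,c(x)\neq c(x')}\rho(x,x')=0.$$
   Context: Online classification: at each time $t=1,2,\dots$ the learner receives $x_t\in\mathcal{X}$, predicts $\hat y_t\in\mathcal{Y}$, then sees the label $y_t=c(x_t)$ (realizable setting with fixed concept $c$). The 1-nearest neighbor rule predicts $\hat y_t=y_{\mathrm{NN}_t}$ where $\mathrm{NN}_t\in\arg\min_{\tau=1,\dots,t-1}\rho(x_t,x_\tau)$, with ties broken arbitrarily (the prediction at $t=1$ is arbitrary). Sublinear regret here means the average loss $\frac1T\sum_{t\le T}\ell(x_t,y_t,\hat y_t)$ converges to $0$. The infimum over an empty set is $+\infty$. *)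

theory Defs
  imports "HOL-Analysis.Analysis"
begin

definition nn_rule :: "('a::metric_space list \<Rightarrow> 'a \<Rightarrow> nat) \<Rightarrow> bool" where
  "nn_rule N \<longleftrightarrow> (\<forall>hs q. hs \<noteq> [] \<longrightarrow>
      N hs q < length hs \<and> (\<forall>i<length hs. dist q (hs ! N hs q) \<le> dist q (hs ! i)))"

definition nn_pred :: "('a list \<Rightarrow> 'a \<Rightarrow> nat) \<Rightarrow> 'b \<Rightarrow> ('a \<Rightarrow> 'b) \<Rightarrow> (nat \<Rightarrow> 'a) \<Rightarrow> nat \<Rightarrow> 'b" where
  "nn_pred N y1 c xs t = (if t = 0 then y1 else c (xs (N (map xs [0..<t]) (xs t))))"

definition avg_loss :: "('a list \<Rightarrow> 'a \<Rightarrow> nat) \<Rightarrow> 'b \<Rightarrow> ('a \<Rightarrow> 'b) \<Rightarrow> (nat \<Rightarrow> 'a) \<Rightarrow> nat \<Rightarrow> real" where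
  "avg_loss N y1 c xs T =
     (\<Sum>t<Suc T. if c (xs t) \<noteq> nn_pred N y1 c xs t then 1 else 0) / real (Suc T)"

end

theory Submission
  imports Defs
begin

text \<open>If the classes are separated by some d > 0, cover the space by finitely many balls of
  radius d/2. A mistake at time t means the nearest past instance, hence every past instance,
  is at distance at least d, so each ball contains at most one mistake: the number of mistakes
  is bounded and the average loss tends to 0. Conversely, if labels change at arbitrarily small
  scales, for every history pick two points a, b of different labels much closer to each other
  than any two points of the history. Presenting a and then b, or b and then a, makes the
  1-NN rule err on the second point, since otherwise the history would contain points of both
  labels next to a and b. Repeating this forces a mistake every second round.\<close>

lemma INF_ereal_eq_0_iff:
  fixes g :: "'p \<Rightarrow> real"
  assumes "\<And>p. g p \<ge> 0"
  shows "(INF p \<in> S. ereal (g p)) = 0 \<longleftrightarrow> (\<forall>e>0. \<exists>p\<in>S. g p < e)"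
proof
  assume inf: "(INF p \<in> S. ereal (g p)) = 0"
  show "\<forall>e>0. \<exists>p\<in>S. g p < e"
  proof (intro allI impI)
    fix e :: real
    assume "e > 0"
    then have "(INF p \<in> S. ereal (g p)) < ereal e" using inf by simp
    then show "\<exists>p\<in>S. g p < e" by (simp add: INF_less_iff)
  qed
next
  assume small: "\<forall>e>0. \<exists>p\<in>S. g p < e"
  have "(INF p \<in> S. ereal (g p)) \<le> 0"
  proof (rule ereal_le_epsilon2)
    fix e :: real
    assume "0 < e"
    then obtain p where "p \<in> S" "g p < e" using small by blast
    then have "(INF p \<in> S. ereal (g p)) \<le> ereal (g p)" by (intro INF_lower)
    also have "\<dots> \<le> 0 + ereal e" using \<open>g p < e\<close> by simp
    finally show "(INF p \<in> S. ereal (g p)) \<le> 0 + ereal e" .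
  qed
  moreover have "0 \<le> (INF p \<in> S. ereal (g p))"
    using assms by (intro INF_greatest) simp
  ultimately show "(INF p \<in> S. ereal (g p)) = 0" by simp
qed

lemma finite_imp_uniformly_separated:
  fixes S :: "'a::metric_space set"
  assumes "finite S"
  obtains e where "e > 0" "\<And>x y. x \<in> S \<Longrightarrow> y \<in> S \<Longrightarrow> x \<noteq> y \<Longrightarrow> e \<le> dist x y"
proof -
  define D where "D = {dist x y | x y. x \<in> S \<and> y \<in> S \<and> x \<noteq> y}"
  have "D \<subseteq> (\<lambda>(x, y). dist x y) ` (S \<times> S)" unfolding D_def by auto
  then have "finite D" by (rule finite_subset) (use assms in simp)
  have pos: "\<forall>d\<in>D. d > 0" unfolding D_def by auto
  show thesis
  proof (cases "D = {}")
    case True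
    then show thesis by (intro that[of 1]) (auto simp: D_def)
  next
    case False
    show thesis
    proof (rule that)
      show "Min D > 0" using \<open>finite D\<close> False pos by simp
      fix x y
      assume "x \<in> S" "y \<in> S" "x \<noteq> y"
      then have "dist x y \<in> D" unfolding D_def by blast
      then show "Min D \<le> dist x y" using \<open>finite D\<close> by simp
    qed
  qed
qed

lemma totally_bounded_separated_card_le:
  fixes S :: "'a::metric_space set"
  assumes "totally_bounded S" "d > 0"
  obtains B :: nat where
    "\<And>(f :: 'i \<Rightarrow> 'a) I. f ` I \<subseteq> S \<Longrightarrow>
       (\<And>i j. i \<in> I \<Longrightarrow> j \<in> I \<Longrightarrow> i \<noteq> j \<Longrightarrow> d \<le> dist (f i) (f j)) \<Longrightarrow> card I \<le> B"
proof -
  obtain K where "finite K" and cover: "S \<subseteq> (\<Union>k\<in>K. {y. dist k y < d/2})"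
    using assms unfolding totally_bounded_metric by (meson half_gt_zero)
  define ctr where "ctr y = (SOME k. k \<in> K \<and> dist k y < d/2)" for y
  have ctr: "ctr y \<in> K \<and> dist (ctr y) y < d/2" if "y \<in> S" for y
    unfolding ctr_def by (rule someI_ex) (use cover that in blast)
  show thesis
  proof (rule that[of "card K"])
    fix f :: "'i \<Rightarrow> 'a" and I
    assume fI: "f ` I \<subseteq> S"
      and sep: "\<And>i j. i \<in> I \<Longrightarrow> j \<in> I \<Longrightarrow> i \<noteq> j \<Longrightarrow> d \<le> dist (f i) (f j)"
    have "inj_on (ctr \<circ> f) I"
    proof (rule inj_onI, rule ccontr)
      fix i j
      assume ij: "i \<in> I" "j \<in> I" "(ctr \<circ> f) i = (ctr \<circ> f) j" "i \<noteq> j"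
      have "dist (f i) (f j) \<le> dist (ctr (f i)) (f i) + dist (ctr (f j)) (f j)"
        using dist_triangle2[of "f i" "f j" "ctr (f i)"] ij(3) by (simp add: dist_commute)
      also have "\<dots> < d"
        using ctr[of "f i"] ctr[of "f j"] fI ij(1,2) by (auto simp: image_subset_iff)
      finally show False using sep[OF ij(1,2,4)] by simp
    qed
    moreover have "(ctr \<circ> f) ` I \<subseteq> K" using ctr fI by auto
    ultimately show "card I \<le> card K" using \<open>finite K\<close> by (rule card_inj_on_le)
  qed
qed

definition nn_label :: "('a list \<Rightarrow> 'a \<Rightarrow> nat) \<Rightarrow> ('a \<Rightarrow> 'b) \<Rightarrow> 'a list \<Rightarrow> 'a \<Rightarrow> 'b" where
  "nn_label N c H x = c (H ! N H x)"

definition nn_mistake :: "('a list \<Rightarrow> 'a \<Rightarrow> nat) \<Rightarrow> 'b \<Rightarrow> ('a \<Rightarrow> 'b) \<Rightarrow> (nat \<Rightarrow> 'a) \<Rightarrow> nat \<Rightarrow> bool" where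
  "nn_mistake N y1 c xs t \<longleftrightarrow> c (xs t) \<noteq> nn_pred N y1 c xs t"

lemma nn_ruleD:
  assumes "nn_rule N" "H \<noteq> []"
  shows "N H q < length H" "i < length H \<Longrightarrow> dist q (H ! N H q) \<le> dist q (H ! i)"
  using assms unfolding nn_rule_def by blast+

lemma nn_pred_eq_nn_label:
  assumes "nn_rule N" "t > 0"
  shows "nn_pred N y1 c xs t = nn_label N c (map xs [0..<t]) (xs t)"
  using nn_ruleD(1)[OF assms(1), of "map xs [0..<t]" "xs t"] assms(2)
  by (simp add: nn_pred_def nn_label_def)

lemma avg_loss_eq_card_mistakes:
  "avg_loss N y1 c xs T = real (card {t \<in> {..<Suc T}. nn_mistake N y1 c xs t}) / real (Suc T)"
  unfolding avg_loss_def nn_mistake_def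
  by (simp only: sum.If_cases[OF finite_lessThan] sum.neutral_const sum_constant)
    (simp add: Int_def conj_commute)

lemma avg_loss_nonneg: "0 \<le> avg_loss N y1 c xs T"
  unfolding avg_loss_def by (intro divide_nonneg_pos sum_nonneg) auto

lemma nn_mistake_far_from_past:
  fixes xs :: "nat \<Rightarrow> 'a::metric_space"
  assumes "nn_mistake N y1 c xs t'" "t < t'"
    and "nn_rule N" and sep: "\<And>x y. c x \<noteq> c y \<Longrightarrow> d \<le> dist x y"
  shows "d \<le> dist (xs t) (xs t')"
proof -
  let ?H = "map xs [0..<t']"
  let ?s = "N ?H (xs t')"
  have "?H \<noteq> []" using \<open>t < t'\<close> by simp
  then have "?s < t'" and nearest: "dist (xs t') (xs ?s) \<le> dist (xs t') (xs t)"
    using nn_ruleD[OF assms(3), where H = ?H and q = "xs t'"] \<open>t < t'\<close> by auto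
  have "nn_pred N y1 c xs t' = nn_label N c ?H (xs t')"
    using \<open>t < t'\<close> by (intro nn_pred_eq_nn_label[OF assms(3)]) simp
  also have "\<dots> = c (xs ?s)"
    using \<open>?s < t'\<close> by (simp add: nn_label_def)
  finally have "nn_pred N y1 c xs t' = c (xs ?s)" .
  then have "c (xs t') \<noteq> c (xs ?s)"
    using assms(1) by (simp add: nn_mistake_def)
  then have "d \<le> dist (xs t') (xs ?s)" by (rule sep)
  with nearest show ?thesis by (simp add: dist_commute)
qed

lemma nn_mistakes_separated:
  fixes xs :: "nat \<Rightarrow> 'a::metric_space"
  assumes "nn_mistake N y1 c xs i" "nn_mistake N y1 c xs j" "i \<noteq> j"
    and "nn_rule N" and sep: "\<And>x y. c x \<noteq> c y \<Longrightarrow> d \<le> dist x y"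
  shows "d \<le> dist (xs i) (xs j)"
proof (cases "i < j")
  case True
  then show ?thesis by (rule nn_mistake_far_from_past[OF assms(2) _ assms(4) sep])
next
  case False
  then have "j < i" using \<open>i \<noteq> j\<close> by simp
  from nn_mistake_far_from_past[OF assms(1) this assms(4) sep] show ?thesis
    by (simp add: dist_commute)
qed

lemma avg_loss_tendsto_0_if_separated:
  fixes c :: "'a::metric_space \<Rightarrow> 'b"
  assumes "totally_bounded (UNIV :: 'a set)" "nn_rule N"
    and "d > 0" and sep: "\<And>x y. c x \<noteq> c y \<Longrightarrow> d \<le> dist x y"
  shows "avg_loss N y1 c xs \<longlonglongrightarrow> 0"
proof -
  obtain B where B: "\<And>(f :: nat \<Rightarrow> 'a) I. f ` I \<subseteq> UNIV \<Longrightarrow>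
      (\<And>i j. i \<in> I \<Longrightarrow> j \<in> I \<Longrightarrow> i \<noteq> j \<Longrightarrow> d \<le> dist (f i) (f j)) \<Longrightarrow> card I \<le> B"
    using totally_bounded_separated_card_le[OF assms(1,3)] by metis
  have "card {t \<in> {..<Suc T}. nn_mistake N y1 c xs t} \<le> B" for T
    by (rule B[OF subset_UNIV]) (auto intro: nn_mistakes_separated[OF _ _ _ assms(2) sep])
  then have upper: "avg_loss N y1 c xs T \<le> real B / real (Suc T)" for T
    unfolding avg_loss_eq_card_mistakes by (intro divide_right_mono) auto
  have "eventually (\<lambda>T. 0 \<le> avg_loss N y1 c xs T) sequentially"
    by (simp add: avg_loss_nonneg)
  moreover have "eventually (\<lambda>T. avg_loss N y1 c xs T \<le> real B / real (Suc T)) sequentially"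
    using upper by (intro always_eventually) blast
  moreover have "(\<lambda>T. real B / real (Suc T)) \<longlonglongrightarrow> 0"
    using LIMSEQ_Suc[OF lim_const_over_n[of "real B"]] by simp
  ultimately show ?thesis by (rule tendsto_sandwich[OF _ _ tendsto_const])
qed

lemma nn_label_correct_imp_witness:
  fixes H :: "'a::metric_space list"
  assumes "nn_rule N" "nn_label N c (H @ [a]) b = c b" "c a \<noteq> c b"
  shows "\<exists>h\<in>set H. c h = c b \<and> dist b h \<le> dist b a"
proof -
  let ?H = "H @ [a]"
  let ?i = "N ?H b"
  have "?i < length ?H" using nn_ruleD(1)[OF assms(1), where H = ?H and q = b] by simp
  have nearest: "dist b (?H ! ?i) \<le> dist b (?H ! length H)"
    using nn_ruleD(2)[OF assms(1), where H = ?H and q = b and i = "length H"] by simp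
  have "?i \<noteq> length H" using assms(2,3) by (auto simp: nn_label_def)
  with \<open>?i < length ?H\<close> have "?i < length H" by simp
  then show ?thesis
    using nearest assms(2) by (intro bexI[of _ "H ! ?i"]) (auto simp: nth_append nn_label_def)
qed

lemma nn_label_mistake_exists:
  fixes c :: "'a::metric_space \<Rightarrow> 'b"
  assumes nn: "nn_rule N" and small: "\<forall>e>0. \<exists>x y. c x \<noteq> c y \<and> dist x y < e"
  shows "\<exists>a b. nn_label N c (H @ [a]) b \<noteq> c b"
proof (rule ccontr)
  assume "\<not> ?thesis"
  then have correct: "\<And>a b. nn_label N c (H @ [a]) b = c b" by blast
  obtain e where "e > 0" and sepH: "\<And>h h'. h \<in> set H \<Longrightarrow> h' \<in> set H \<Longrightarrow> h \<noteq> h' \<Longrightarrow> e \<le> dist h h'"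
    using finite_imp_uniformly_separated[of "set H"] by blast
  obtain a b where ab: "c a \<noteq> c b" "dist a b < e/3"
    using small \<open>e > 0\<close> by (meson divide_pos_pos zero_less_numeral)
  obtain h where h: "h \<in> set H" "c h = c b" "dist b h \<le> dist b a"
    using nn_label_correct_imp_witness[OF nn correct ab(1)] by blast
  obtain h' where h': "h' \<in> set H" "c h' = c a" "dist a h' \<le> dist a b"
    using nn_label_correct_imp_witness[OF nn correct not_sym[OF ab(1)]] by blast
  have "e \<le> dist h h'" using h h' ab(1) by (intro sepH) auto
  also have "\<dots> \<le> dist h b + dist b a + dist a h'"
    using dist_triangle[of h h' b] dist_triangle[of b h' a] by linarith
  also have "\<dots> < e" using h(3) h'(3) ab(2) by (simp add: dist_commute)
  finally show False by simp
qed

primrec online_run :: "('a list \<Rightarrow> 'a) \<Rightarrow> nat \<Rightarrow> 'a list" where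
  "online_run f 0 = []"
| "online_run f (Suc n) = online_run f n @ [f (online_run f n)]"

definition online_seq :: "('a list \<Rightarrow> 'a) \<Rightarrow> nat \<Rightarrow> 'a" where
  "online_seq f t = f (online_run f t)"

lemma length_online_run: "length (online_run f n) = n"
  by (induction n) simp_all

lemma map_online_seq: "map (online_seq f) [0..<n] = online_run f n"
  by (induction n) (simp_all add: online_seq_def)

definition nn_bad_pair :: "('a list \<Rightarrow> 'a \<Rightarrow> nat) \<Rightarrow> ('a \<Rightarrow> 'b) \<Rightarrow> 'a list \<Rightarrow> 'a \<times> 'a" where
  "nn_bad_pair N c H = (SOME (a, b). nn_label N c (H @ [a]) b \<noteq> c b)"

text \<open>Rounds 2k+1 and 2k+2 present the bad pair of the history of length 2k+1.\<close>

definition nn_adversary :: "('a list \<Rightarrow> 'a \<Rightarrow> nat) \<Rightarrow> ('a \<Rightarrow> 'b) \<Rightarrow> 'a list \<Rightarrow> 'a" where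
  "nn_adversary N c H =
     (if odd (length H) then fst (nn_bad_pair N c H) else snd (nn_bad_pair N c (butlast H)))"

lemma nn_adversary_mistake:
  fixes c :: "'a::metric_space \<Rightarrow> 'b"
  assumes nn: "nn_rule N" and small: "\<forall>e>0. \<exists>x y. c x \<noteq> c y \<and> dist x y < e"
  shows "nn_mistake N y1 c (online_seq (nn_adversary N c)) (2 * k + 2)"
proof -
  let ?f = "nn_adversary N c"
  define H where "H = online_run ?f (2 * k + 1)"
  obtain a b where ab: "nn_bad_pair N c H = (a, b)" by fastforce
  have "\<exists>p. (\<lambda>(a, b). nn_label N c (H @ [a]) b \<noteq> c b) p"
    using nn_label_mistake_exists[OF nn small, of H] by auto
  from someI_ex[OF this] have mistake: "nn_label N c (H @ [a]) b \<noteq> c b"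
    using ab unfolding nn_bad_pair_def by simp
  have "odd (length H)" unfolding H_def length_online_run by simp
  then have run: "online_run ?f (2 * k + 2) = H @ [a]"
    using ab by (simp add: H_def nn_adversary_def)
  then have seq: "online_seq ?f (2 * k + 2) = b"
    using ab \<open>odd (length H)\<close> by (simp add: online_seq_def nn_adversary_def)
  have hist: "map (online_seq ?f) [0..<2 * k + 2] = H @ [a]"
    using run by (simp only: map_online_seq)
  have "nn_pred N y1 c (online_seq ?f) (2 * k + 2) =
      nn_label N c (map (online_seq ?f) [0..<2 * k + 2]) (online_seq ?f (2 * k + 2))"
    by (rule nn_pred_eq_nn_label[OF nn]) simp
  then show ?thesis
    using mistake unfolding nn_mistake_def hist seq by auto
qed

lemma avg_loss_not_tendsto_0_if_mistakes_even:
  assumes mistake: "\<And>k. nn_mistake N y1 c xs (2 * k + 2)"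
  shows "\<not> avg_loss N y1 c xs \<longlonglongrightarrow> 0"
proof
  have lower: "1/3 \<le> avg_loss N y1 c xs (2 * m + 2)" for m
  proof -
    have "(\<lambda>k. 2 * k + 2) ` {..m} \<subseteq> {t \<in> {..<Suc (2 * m + 2)}. nn_mistake N y1 c xs t}"
      using mistake by auto
    then have "card ((\<lambda>k. 2 * k + 2) ` {..m}) \<le> card {t \<in> {..<Suc (2 * m + 2)}. nn_mistake N y1 c xs t}"
      by (rule card_mono[rotated]) simp
    also have "card ((\<lambda>k. 2 * k + 2) ` {..m}) = Suc m"
      by (subst card_image) (auto simp: inj_on_def)
    finally have "real (Suc m) / real (Suc (2 * m + 2)) \<le> avg_loss N y1 c xs (2 * m + 2)"
      unfolding avg_loss_eq_card_mistakes by (intro divide_right_mono) auto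
    moreover have "1/3 \<le> real (Suc m) / real (Suc (2 * m + 2))" by (simp add: field_simps)
    ultimately show ?thesis by linarith
  qed
  assume "avg_loss N y1 c xs \<longlonglongrightarrow> 0"
  then have "eventually (\<lambda>T. avg_loss N y1 c xs T < 1/3) sequentially"
    by (rule order_tendstoD) simp
  then obtain M where "\<And>T. T \<ge> M \<Longrightarrow> avg_loss N y1 c xs T < 1/3"
    unfolding eventually_sequentially by blast
  then have "avg_loss N y1 c xs (2 * M + 2) < 1/3" by simp
  with lower[of M] show False by simp
qed

theorem proposition1:
  fixes c :: "'a::metric_space \<Rightarrow> 'b"
    and N :: "'a list \<Rightarrow> 'a \<Rightarrow> nat"
    and y1 :: 'b
  assumes "totally_bounded (UNIV :: 'a set)"
    and "nn_rule N"
  shows "(\<exists>xs :: nat \<Rightarrow> 'a. \<not> (avg_loss N y1 c xs \<longlonglongrightarrow> 0)) \<longleftrightarrow>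
         (INF p \<in> {(x, x'). c x \<noteq> c x'}. ereal (dist (fst p) (snd p))) = 0"
proof -
  let ?small = "\<forall>e>0. \<exists>x y. c x \<noteq> c y \<and> dist x y < e"
  have "(INF p \<in> {(x, x'). c x \<noteq> c x'}. ereal (dist (fst p) (snd p))) = 0 \<longleftrightarrow> ?small"
    by (subst INF_ereal_eq_0_iff) auto
  moreover have "\<exists>xs. \<not> avg_loss N y1 c xs \<longlonglongrightarrow> 0" if ?small
    using avg_loss_not_tendsto_0_if_mistakes_even[OF nn_adversary_mistake[OF assms(2) that]] by blast
  moreover have "avg_loss N y1 c xs \<longlonglongrightarrow> 0" if separated: "\<not> ?small" for xs
  proof -
    obtain d where "d > 0" and "\<forall>x y. c x = c y \<or> d \<le> dist x y"
      using separated by (auto simp: not_less)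
    then have sep: "\<And>x y. c x \<noteq> c y \<Longrightarrow> d \<le> dist x y" by blast
    show ?thesis by (rule avg_loss_tendsto_0_if_separated[OF assms \<open>d > 0\<close> sep])
  qed
  ultimately show ?thesis by blast
qed

end
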